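(* Let $V$ be a real vector space and $X\subseteq V$. The following are equivalent: (i) $X$ is contained in a finite union of lines; (ii) $X$ contains no infinite convexly independent subset; (iii) the order-dimension of $Co(V,X)$ is finite.
   Context: A subset $Y\subseteq V$ is convexly independent if $y\notin\mathrm{conv}(Y\setminus\{y\})$ for every $y\in Y$, where $\mathrm{conv}$ denotes the convex hull. $Co(V,X)$ is the family of sets $C\cap X$, $C$ convex in $V$, ordered by inclusion. The order-dimension of a poset $P$ is the least cardinal $\lambda$ such that $P$ embeds (as a poset) into a direct product of $\lambda$ chains, equivalently the order of $P$ is the intersection of $\lambda$ linear orders. *)

theory Defs
  imports "HOL-Analysis.Analysis"
begin

definition is_line :: "'a::real_vector set \<Rightarrow> bool" where
  "is_line L \<longleftrightarrow> (\<exists>a b. a \<noteq> b \<and> L = affine hull {a, b})"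

definition convexly_independent :: "'a::real_vector set \<Rightarrow> bool" where
  "convexly_independent Y \<longleftrightarrow> (\<forall>y\<in>Y. y \<notin> convex hull (Y - {y}))"

definition Co :: "'a::real_vector set \<Rightarrow> 'a set set" where
  "Co X = {C \<inter> X | C. convex C}"

definition realizer :: "'b set \<Rightarrow> ('b \<Rightarrow> 'b \<Rightarrow> bool) \<Rightarrow> 'b rel set \<Rightarrow> bool" where
  "realizer P le R \<longleftrightarrow>
     (\<forall>r\<in>R. linear_order_on P r \<and> r \<subseteq> P \<times> P) \<and>
     (\<forall>x\<in>P. \<forall>y\<in>P. le x y \<longleftrightarrow> (\<forall>r\<in>R. (x, y) \<in> r))"

text \<open>The order-dimension (least cardinality of a realizer) is finite iff some
  finite realizer exists.\<close>
definition finite_order_dimension :: "'b set \<Rightarrow> ('b \<Rightarrow> 'b \<Rightarrow> bool) \<Rightarrow> bool" where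
  "finite_order_dimension P le \<longleftrightarrow> (\<exists>R. finite R \<and> realizer P le R)"

end

theory Submission
  imports Defs "HOL-Library.Ramsey"
begin

text \<open>
  (i) \<Longrightarrow> (ii): a convexly independent set meets a line in at most two points, since of three
  collinear points one lies between the other two.

  (i) \<Longrightarrow> (iii): if X lies on finitely many lines, a trace C \<inter> X is determined by its
  downward and upward closures along each line (with respect to a coordinate on the line),
  because C is convex.  Each closure map takes values in a chain, and finitely many
  chain-valued maps yield finitely many lexicographic linear orders realizing inclusion.

  (iii) \<Longrightarrow> (ii): for y in a convexly independent Y \<subseteq> X, some linear order of a realizer
  must put {y} above conv(Y - {y}) \<inter> X.  For y \<noteq> z we have {y} \<subseteq> conv(Y - {z}), so one order
  doing this for both y and z would give {y} \<le> conv(Y - {z}) \<le> {z} \<le> conv(Y - {y}) by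
  transitivity.  Hence distinct points need distinct orders and Y is finite.

  (ii) \<Longrightarrow> (i): if X is not covered by finitely many lines, choose x 0, x 1, \<dots> in X with
  no x n on a line through two earlier points.  If the x n span an infinite-dimensional
  affine space, infinitely many of them are affinely, hence convexly, independent.
  Otherwise colour every increasing triple by the signs of its orientations in all
  coordinate planes.  By Ramsey's theorem some infinite subsequence is monochromatic:
  either in some plane all its triples turn the same way, which puts its points in convex
  position, or all orientations vanish and three of its points would be collinear.
\<close>

section \<open>Realizers from finitely many chain-valued maps\<close>

fun lex_le :: "('b \<Rightarrow> 'c set) list \<Rightarrow> 'b \<Rightarrow> 'b \<Rightarrow> bool" where
  "lex_le [] x y \<longleftrightarrow> True"
| "lex_le (h # hs) x y \<longleftrightarrow> h x \<subset> h y \<or> (h x = h y \<and> lex_le hs x y)"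

lemma lex_le_linear_order_on:
  assumes chain: "\<And>h x y. h \<in> set hs \<Longrightarrow> x \<in> P \<Longrightarrow> y \<in> P \<Longrightarrow> h x \<subseteq> h y \<or> h y \<subseteq> h x"
    and separating: "\<And>x y. x \<in> P \<Longrightarrow> y \<in> P \<Longrightarrow> (\<forall>h\<in>set hs. h x = h y) \<Longrightarrow> x = y"
  shows "linear_order_on P {(x, y). x \<in> P \<and> y \<in> P \<and> lex_le hs x y}"
  unfolding linear_order_on_def partial_order_on_def preorder_on_def
proof (intro conjI)
  have "lex_le hs x x" for x by (induction hs) auto
  then show "refl_on P {(x, y). x \<in> P \<and> y \<in> P \<and> lex_le hs x y}"
    by (auto simp: refl_on_def)
  have "lex_le hs x z" if "lex_le hs x y" "lex_le hs y z" for x y z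
    using that by (induction hs) auto
  then show "trans {(x, y). x \<in> P \<and> y \<in> P \<and> lex_le hs x y}"
    by (auto intro: transI)
  have "\<forall>h\<in>set hs. h x = h y" if "lex_le hs x y" "lex_le hs y x" for x y
    using that by (induction hs) auto
  then show "antisym {(x, y). x \<in> P \<and> y \<in> P \<and> lex_le hs x y}"
    using separating by (auto intro: antisymI)
  have "lex_le hs x y \<or> lex_le hs y x" if "x \<in> P" "y \<in> P" for x y
    using chain[OF _ that] by (induction hs) auto
  then show "total_on P {(x, y). x \<in> P \<and> y \<in> P \<and> lex_le hs x y}"
    by (auto simp: total_on_def)
qed (auto simp: refl_on_def)

lemma finite_order_dimension_if_chain_maps:
  fixes F :: "('b \<Rightarrow> 'c set) set"
  assumes "finite F"
    and chain: "\<And>h x y. h \<in> F \<Longrightarrow> x \<in> P \<Longrightarrow> y \<in> P \<Longrightarrow> h x \<subseteq> h y \<or> h y \<subseteq> h x"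
    and le_iff: "\<And>x y. x \<in> P \<Longrightarrow> y \<in> P \<Longrightarrow> le x y \<longleftrightarrow> (\<forall>h\<in>F. h x \<subseteq> h y)"
    and antisym: "\<And>x y. x \<in> P \<Longrightarrow> y \<in> P \<Longrightarrow> le x y \<Longrightarrow> le y x \<Longrightarrow> x = y"
  shows "finite_order_dimension P le"
proof -
  obtain hs where hs: "set hs = F" using finite_list[OF \<open>finite F\<close>] by blast
  \<comment> \<open>if h x is not below h y, the order comparing by h first puts y strictly before x\<close>
  define rel where "rel h = {(x, y). x \<in> P \<and> y \<in> P \<and> lex_le (h # hs) x y}" for h
  have "linear_order_on P (rel h)" if "h \<in> F" for h
    unfolding rel_def
  proof (rule lex_le_linear_order_on)
    have "set (h # hs) = F" using hs that by auto
    then show "h' x \<subseteq> h' y \<or> h' y \<subseteq> h' x"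
      if "h' \<in> set (h # hs)" "x \<in> P" "y \<in> P" for h' x y
      using chain that by blast
    show "x = y" if "x \<in> P" "y \<in> P" "\<forall>h'\<in>set (h # hs). h' x = h' y" for x y
      using that by (intro antisym) (auto simp: le_iff hs)
  qed
  moreover have "le x y \<longleftrightarrow> (\<forall>h\<in>F. (x, y) \<in> rel h)" if "x \<in> P" "y \<in> P" for x y
  proof
    assume "le x y"
    then have "\<forall>h\<in>F. h x \<subseteq> h y" using le_iff that by blast
    moreover have "lex_le hs' x y" if "\<forall>h\<in>set hs'. h x \<subseteq> h y" for hs'
      using that by (induction hs') auto
    ultimately have "lex_le (h # hs) x y" if "h \<in> F" for h
      using that hs by (metis insert_iff list.simps(15))
    then show "\<forall>h\<in>F. (x, y) \<in> rel h"
      using that unfolding rel_def by blast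
  next
    assume "\<forall>h\<in>F. (x, y) \<in> rel h"
    then have "\<not> h y \<subset> h x" if "h \<in> F" for h
      using that unfolding rel_def by fastforce
    then have "h x \<subseteq> h y" if "h \<in> F" for h
      using chain[OF that \<open>x \<in> P\<close> \<open>y \<in> P\<close>] that by blast
    then show "le x y" using le_iff[OF that] by blast
  qed
  moreover have "rel h \<subseteq> P \<times> P" for h
    unfolding rel_def by blast
  ultimately have "realizer P le (rel ` F)"
    unfolding realizer_def by (simp add: ball_simps)
  then show ?thesis
    unfolding finite_order_dimension_def using \<open>finite F\<close> by blast
qed

section \<open>Points on a line\<close>

lemma line_coordinate:
  assumes "is_line L"
  obtains coord :: "'a::real_vector \<Rightarrow> real"
  where "\<And>x y z. x \<in> L \<Longrightarrow> y \<in> L \<Longrightarrow> z \<in> L \<Longrightarrow> coord x \<le> coord y \<Longrightarrow> coord y \<le> coord z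
           \<Longrightarrow> y \<in> closed_segment x z"
proof -
  obtain a b where "a \<noteq> b" and L: "L = range (\<lambda>t. a + t *\<^sub>R (b - a))"
    using assms affine_hull_2_alt unfolding is_line_def by metis
  then have "independent {b - a}" by simp
  then obtain coord :: "'a \<Rightarrow> real" where coord: "linear coord" "coord (b - a) = 1"
    using linear_independent_extend[of "{b - a}" "\<lambda>_. 1"] by auto
  have between: "a + t *\<^sub>R (b - a) \<in> closed_segment (a + s *\<^sub>R (b - a)) (a + u *\<^sub>R (b - a))"
    if "coord (a + s *\<^sub>R (b - a)) \<le> coord (a + t *\<^sub>R (b - a))"
      "coord (a + t *\<^sub>R (b - a)) \<le> coord (a + u *\<^sub>R (b - a))" for s t u
  proof -
    have "coord (a + r *\<^sub>R (b - a)) = coord a + r" for r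
      using coord by (simp add: linear_add linear_scale)
    then have "t \<in> closed_segment s u"
      using that by (simp add: closed_segment_eq_real_ivl)
    then have "t *\<^sub>R (b - a) \<in> closed_segment (s *\<^sub>R (b - a)) (u *\<^sub>R (b - a))"
      using closed_segment_linear_image[OF linear_scaleR_left[of "b - a"], of s u] by blast
    then show ?thesis
      using closed_segment_translation[of a] by blast
  qed
  show ?thesis
  proof (rule that)
    fix x y z assume "x \<in> L" "y \<in> L" "z \<in> L" "coord x \<le> coord y" "coord y \<le> coord z"
    then show "y \<in> closed_segment x z"
      unfolding L using between by blast
  qed
qed

lemma finite_inter_line_if_convexly_independent:
  assumes "is_line L" and ci: "convexly_independent Y"
  shows "finite (Y \<inter> L)"
proof (rule ccontr)
  assume "infinite (Y \<inter> L)"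
  then obtain F where "F \<subseteq> Y \<inter> L" "finite F" "card F = 3"
    using infinite_arbitrarily_large by blast
  then obtain x y z where xyz: "x \<in> Y \<inter> L" "y \<in> Y \<inter> L" "z \<in> Y \<inter> L" "x \<noteq> y" "x \<noteq> z" "y \<noteq> z"
    by (auto simp: card_3_iff)
  obtain coord :: "'a \<Rightarrow> real" where between: "\<And>x y z. x \<in> L \<Longrightarrow> y \<in> L \<Longrightarrow> z \<in> L \<Longrightarrow> coord x \<le> coord y \<Longrightarrow> coord y \<le> coord z
           \<Longrightarrow> y \<in> closed_segment x z"
    using line_coordinate[OF \<open>is_line L\<close>] by blast
  have no_middle: False
    if "u \<in> Y \<inter> L" "v \<in> Y \<inter> L" "w \<in> Y \<inter> L" "v \<noteq> u" "v \<noteq> w" "coord u \<le> coord v" "coord v \<le> coord w"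
    for u v w
  proof -
    have "v \<in> convex hull {u, w}"
      using between that by (simp add: segment_convex_hull)
    also have "\<dots> \<subseteq> convex hull (Y - {v})"
      using that by (intro hull_mono) auto
    finally show False
      using ci \<open>v \<in> Y \<inter> L\<close> unfolding convexly_independent_def by blast
  qed
  show False
    by (rule le_cases3[of "coord x" "coord y" "coord z"]) (use no_middle xyz in metis)+
qed

lemma finite_if_convexly_independent_covered_by_lines:
  assumes "finite \<L>" "\<forall>L\<in>\<L>. is_line L" "Y \<subseteq> \<Union>\<L>" "convexly_independent Y"
  shows "finite Y"
proof -
  have "Y = (\<Union>L\<in>\<L>. Y \<inter> L)" using assms(3) by blast
  then show ?thesis
    using assms finite_inter_line_if_convexly_independent by (metis finite_UN_I)
qed

lemma down_closures_chain:
  fixes q :: "'a \<Rightarrow> 'b::linorder"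
  shows "{x\<in>Z. \<exists>s\<in>A. q x \<le> q s} \<subseteq> {x\<in>Z. \<exists>s\<in>B. q x \<le> q s}
       \<or> {x\<in>Z. \<exists>s\<in>B. q x \<le> q s} \<subseteq> {x\<in>Z. \<exists>s\<in>A. q x \<le> q s}"
  by (smt (verit) le_cases order_trans subsetI mem_Collect_eq)

lemma up_closures_chain:
  fixes q :: "'a \<Rightarrow> 'b::linorder"
  shows "{x\<in>Z. \<exists>s\<in>A. q s \<le> q x} \<subseteq> {x\<in>Z. \<exists>s\<in>B. q s \<le> q x}
       \<or> {x\<in>Z. \<exists>s\<in>B. q s \<le> q x} \<subseteq> {x\<in>Z. \<exists>s\<in>A. q s \<le> q x}"
  by (smt (verit) le_cases order_trans subsetI mem_Collect_eq)

lemma finite_order_dimension_Co_if_covered_by_lines: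
  assumes "finite \<L>" and lines: "\<forall>L\<in>\<L>. is_line L" and cover: "X \<subseteq> \<Union>\<L>"
  shows "finite_order_dimension (Co X) (\<subseteq>)"
proof -
  have "\<forall>L\<in>\<L>. \<exists>c :: 'a \<Rightarrow> real. \<forall>x\<in>L. \<forall>y\<in>L. \<forall>z\<in>L.
          c x \<le> c y \<longrightarrow> c y \<le> c z \<longrightarrow> y \<in> closed_segment x z"
    using line_coordinate lines by metis
  then obtain coord :: "'a set \<Rightarrow> 'a \<Rightarrow> real" where coord:
    "\<And>L x y z. L \<in> \<L> \<Longrightarrow> x \<in> L \<Longrightarrow> y \<in> L \<Longrightarrow> z \<in> L \<Longrightarrow> coord L x \<le> coord L y
       \<Longrightarrow> coord L y \<le> coord L z \<Longrightarrow> y \<in> closed_segment x z"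
    by metis
  define down where "down L A = {x \<in> X \<inter> L. \<exists>s\<in>A \<inter> L. coord L x \<le> coord L s}" for L A
  define up where "up L A = {x \<in> X \<inter> L. \<exists>s\<in>A \<inter> L. coord L s \<le> coord L x}" for L A
  show ?thesis
  proof (rule finite_order_dimension_if_chain_maps[where F = "down ` \<L> \<union> up ` \<L>"])
    show "finite (down ` \<L> \<union> up ` \<L>)" using \<open>finite \<L>\<close> by simp
    show "h A \<subseteq> h B \<or> h B \<subseteq> h A" if "h \<in> down ` \<L> \<union> up ` \<L>" for h and A B :: "'a set"
      using that
    proof (elim UnE imageE)
      fix L assume "h = down L"
      then show ?thesis
        unfolding down_def using down_closures_chain[of "X \<inter> L" "A \<inter> L" "coord L" "B \<inter> L"] by simp
    next
      fix L assume "h = up L"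
      then show ?thesis
        unfolding up_def using up_closures_chain[of "X \<inter> L" "A \<inter> L" "coord L" "B \<inter> L"] by simp
    qed
    show "A \<subseteq> B \<longleftrightarrow> (\<forall>h\<in>down ` \<L> \<union> up ` \<L>. h A \<subseteq> h B)" if "A \<in> Co X" "B \<in> Co X" for A B
    proof
      assume "A \<subseteq> B"
      then show "\<forall>h\<in>down ` \<L> \<union> up ` \<L>. h A \<subseteq> h B"
        unfolding down_def up_def by blast
    next
      assume closures: "\<forall>h\<in>down ` \<L> \<union> up ` \<L>. h A \<subseteq> h B"
      obtain C where "convex C" and B: "B = C \<inter> X" using \<open>B \<in> Co X\<close> unfolding Co_def by blast
      show "A \<subseteq> B"
      proof
        fix x assume "x \<in> A"
        then have "x \<in> X" using \<open>A \<in> Co X\<close> unfolding Co_def by blast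
        then obtain L where L: "L \<in> \<L>" "x \<in> L" using cover by blast
        have "x \<in> down L A" "x \<in> up L A"
          unfolding down_def up_def using \<open>x \<in> A\<close> \<open>x \<in> X\<close> L by auto
        then have "x \<in> down L B" "x \<in> up L B" using closures L by blast+
        then obtain s t where "s \<in> B \<inter> L" "t \<in> B \<inter> L" "coord L s \<le> coord L x" "coord L x \<le> coord L t"
          unfolding down_def up_def by blast
        then have "x \<in> closed_segment s t" using coord L by blast
        also have "\<dots> \<subseteq> C"
          using \<open>convex C\<close> \<open>s \<in> B \<inter> L\<close> \<open>t \<in> B \<inter> L\<close> B by (simp add: closed_segment_subset)
        finally show "x \<in> B" using B \<open>x \<in> X\<close> by blast
      qed
    qed
  qed auto
qed

lemma finite_if_convexly_independent_finite_order_dimension: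
  assumes "finite_order_dimension (Co X) (\<subseteq>)" and "Y \<subseteq> X" and ci: "convexly_independent Y"
  shows "finite Y"
proof -
  obtain R where "finite R" and R: "realizer (Co X) (\<subseteq>) R"
    using assms(1) unfolding finite_order_dimension_def by blast
  define others where "others y = convex hull (Y - {y}) \<inter> X" for y
  have single_Co: "{y} \<in> Co X" if "y \<in> Y" for y
    using that \<open>Y \<subseteq> X\<close> convex_singleton[of y] unfolding Co_def by blast
  have others_Co: "others y \<in> Co X" for y
    unfolding Co_def others_def by blast
  have not_in_others: "\<not> {y} \<subseteq> others y" if "y \<in> Y" for y
    using ci that unfolding convexly_independent_def others_def by blast
  have in_others: "{y} \<subseteq> others z" if "y \<in> Y" "z \<in> Y" "y \<noteq> z" for y z
    using that \<open>Y \<subseteq> X\<close> unfolding others_def by (auto intro: hull_inc)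
  have lin: "\<And>r. r \<in> R \<Longrightarrow> linear_order_on (Co X) r"
    and le_iff: "\<And>A B. A \<in> Co X \<Longrightarrow> B \<in> Co X \<Longrightarrow> A \<subseteq> B \<longleftrightarrow> (\<forall>r\<in>R. (A, B) \<in> r)"
    using R unfolding realizer_def by auto
  have "\<exists>r\<in>R. ({y}, others y) \<notin> r" if "y \<in> Y" for y
    using le_iff[OF single_Co[OF that] others_Co] not_in_others[OF that] by blast
  then obtain witness where witness: "\<And>y. y \<in> Y \<Longrightarrow> witness y \<in> R \<and> ({y}, others y) \<notin> witness y"
    by metis
  have reversed: "(others y, {y}) \<in> witness y" if "y \<in> Y" for y
    using lin[of "witness y"] witness[OF that] single_Co[OF that] others_Co not_in_others[OF that]
    unfolding linear_order_on_def total_on_def by blast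
  have "inj_on witness Y"
  proof (rule inj_onI, rule ccontr)
    fix y z assume "y \<in> Y" "z \<in> Y" "witness y = witness z" "y \<noteq> z"
    define r where "r = witness y"
    have "r \<in> R" "trans r"
      using witness[OF \<open>y \<in> Y\<close>] lin unfolding r_def linear_order_on_def partial_order_on_def
        preorder_on_def by auto
    have "({y}, others z) \<in> r"
      using le_iff[OF single_Co[OF \<open>y \<in> Y\<close>] others_Co] in_others[OF \<open>y \<in> Y\<close> \<open>z \<in> Y\<close> \<open>y \<noteq> z\<close>]
        \<open>r \<in> R\<close> by blast
    moreover have "(others z, {z}) \<in> r"
      using reversed[OF \<open>z \<in> Y\<close>] \<open>witness y = witness z\<close> unfolding r_def by simp
    moreover have "({z}, others y) \<in> r"
      using le_iff[OF single_Co[OF \<open>z \<in> Y\<close>] others_Co] in_others[OF \<open>z \<in> Y\<close> \<open>y \<in> Y\<close>]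
        \<open>y \<noteq> z\<close> \<open>r \<in> R\<close> by blast
    ultimately have "({y}, others y) \<in> r"
      using \<open>trans r\<close> by (meson transD)
    then show False
      using witness[OF \<open>y \<in> Y\<close>] unfolding r_def by simp
  qed
  then show "finite Y"
    using \<open>finite R\<close> witness by (metis finite_subset image_subsetI inj_on_finite)
qed

section \<open>Orientation and convex position\<close>

text \<open>Twice the signed area of the triangle p q r, read in the plane coordinates (f, g).\<close>
definition orient :: "('a \<Rightarrow> real) \<Rightarrow> ('a \<Rightarrow> real) \<Rightarrow> 'a \<Rightarrow> 'a \<Rightarrow> 'a \<Rightarrow> real" where
  "orient f g p q r = (f q - f p) * (g r - g p) - (f r - f p) * (g q - g p)"

lemma orient_swap_coordinates: "orient g f p q r = - orient f g p q r"
  unfolding orient_def by (simp add: algebra_simps)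

lemma orient_rotate: "orient f g q r p = orient f g p q r"
  unfolding orient_def by (simp add: algebra_simps)

lemma orient_swap_points: "orient f g p r q = - orient f g p q r"
  unfolding orient_def by (simp add: algebra_simps)

lemma orient_degenerate [simp]: "orient f g p q p = 0" "orient f g p q q = 0"
  unfolding orient_def by simp_all

lemma convex_orient_nonneg:
  assumes "linear f" "linear g"
  shows "convex {v. 0 \<le> orient f g p q v}"
proof -
  define h where "h v = (f q - f p) * g v - (g q - g p) * f v" for v
  have "linear h"
    using assms unfolding h_def linear_iff by (simp add: linear_add linear_scale algebra_simps)
  moreover have "{v. 0 \<le> orient f g p q v} = h -` {(f q - f p) * g p - (g q - g p) * f p..}"
    unfolding orient_def h_def by (auto simp: algebra_simps)
  ultimately show ?thesis
    by (simp add: convex_linear_vimage)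
qed

lemma infinite_nat_set_neighbours:
  fixes T :: "nat set"
  assumes "infinite T" "b \<in> T" "k \<in> T" "k < b"
  obtains a c where "a \<in> T" "c \<in> T" "a < b" "b < c" "\<And>k. k \<in> T \<Longrightarrow> k \<noteq> b \<Longrightarrow> k \<le> a \<or> c \<le> k"
proof -
  define a where "a = Max {k \<in> T. k < b}"
  have "finite {k \<in> T. k < b}" by simp
  then have "a \<in> {k \<in> T. k < b}"
    unfolding a_def using assms(3,4) by (intro Max_in) auto
  moreover have "k \<le> a" if "k \<in> T" "k < b" for k
    unfolding a_def using \<open>finite {k \<in> T. k < b}\<close> that by simp
  ultimately have a: "a \<in> T" "a < b" "\<And>k. k \<in> T \<Longrightarrow> k < b \<Longrightarrow> k \<le> a"
    by auto
  have "\<exists>c. c \<in> T \<and> b < c"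
    using assms(1) unfolding infinite_nat_iff_unbounded by blast
  define c where "c = (LEAST c. c \<in> T \<and> b < c)"
  have c: "c \<in> T" "b < c"
    using LeastI_ex[OF \<open>\<exists>c. c \<in> T \<and> b < c\<close>] unfolding c_def by auto
  have "c \<le> k" if "k \<in> T" "b < k" for k
    unfolding c_def using that by (simp add: Least_le)
  with a c show thesis
    by (intro that[of a c]) (meson linorder_neqE_nat)+
qed

lemma infinite_convexly_independent_subset_if_orient_pos:
  fixes f g :: "'a::real_vector \<Rightarrow> real" and x :: "nat \<Rightarrow> 'a"
  assumes "linear f" "linear g" "inj_on x T" "infinite T"
    and pos: "\<And>a b c. a \<in> T \<Longrightarrow> b \<in> T \<Longrightarrow> c \<in> T \<Longrightarrow> a < b \<Longrightarrow> b < c \<Longrightarrow> 0 < orient f g (x a) (x b) (x c)"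
  shows "\<exists>Y \<subseteq> x ` T. infinite Y \<and> convexly_independent Y"
proof (intro exI conjI)
  define T' where "T' = {b \<in> T. \<exists>k\<in>T. k < b}"
  obtain k0 where "k0 \<in> T" using \<open>infinite T\<close> by (metis finite.emptyI ex_in_conv)
  then have "(LEAST k. k \<in> T) \<in> T" by (rule LeastI)
  moreover have "(LEAST k. k \<in> T) < k" if "k \<in> T" "k \<noteq> (LEAST k. k \<in> T)" for k
    using Least_le[of "\<lambda>k. k \<in> T", OF that(1)] that(2) by linarith
  ultimately have "T - {LEAST k. k \<in> T} \<subseteq> T'"
    unfolding T'_def by blast
  then have "infinite T'"
    using \<open>infinite T\<close> finite_subset by (metis infinite_remove)
  moreover have "inj_on x T'" using \<open>inj_on x T\<close> unfolding T'_def by (rule inj_on_subset) blast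
  ultimately show "infinite (x ` T')" using finite_imageD by blast
  show "x ` T' \<subseteq> x ` T" unfolding T'_def by blast
  show "convexly_independent (x ` T')"
    unfolding convexly_independent_def
  proof
    fix y assume "y \<in> x ` T'"
    then obtain b k where "y = x b" "b \<in> T" "k \<in> T" "k < b" unfolding T'_def by blast
    then obtain a c where ac: "a \<in> T" "c \<in> T" "a < b" "b < c"
      and outside: "\<And>k. k \<in> T \<Longrightarrow> k \<noteq> b \<Longrightarrow> k \<le> a \<or> c \<le> k"
      using infinite_nat_set_neighbours[OF \<open>infinite T\<close>] by metis
    \<comment> \<open>the line through the neighbours x a and x c separates x b from all other points\<close>
    define S where "S = {v. 0 \<le> orient f g (x a) (x c) v}"
    have "x k \<in> S" if k: "k \<in> T" "k \<noteq> b" for k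
    proof -
      consider "k < a" | "k = a" | "k = c" | "c < k"
        using outside[OF k] by linarith
      then show ?thesis
      proof cases
        case 1
        then show ?thesis
          using pos[OF k(1) ac(1,2)] ac orient_rotate[of f g "x a" "x c" "x k"] unfolding S_def by simp
      next
        case 4
        then show ?thesis using pos[OF ac(1,2) k(1)] ac unfolding S_def by simp
      qed (simp_all add: S_def)
    qed
    then have "x ` T' - {y} \<subseteq> S" using \<open>y = x b\<close> unfolding T'_def by blast
    then have "convex hull (x ` T' - {y}) \<subseteq> S"
      using convex_orient_nonneg[OF assms(1,2)] unfolding S_def by (simp add: hull_minimal)
    moreover have "y \<notin> S"
      using pos[OF ac(1) \<open>b \<in> T\<close> ac(2) ac(3,4)] orient_swap_points[of f g "x a" "x b" "x c"] \<open>y = x b\<close>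
      unfolding S_def by simp
    ultimately show "y \<notin> convex hull (x ` T' - {y})" by blast
  qed
qed

section \<open>Sequences with no three points collinear\<close>

lemma Ramsey_triples:
  fixes \<phi> :: "'a::linorder \<Rightarrow> 'a \<Rightarrow> 'a \<Rightarrow> 'c"
  assumes "infinite S" "finite C" "\<And>a b c. \<phi> a b c \<in> C"
  obtains T t where "T \<subseteq> S" "infinite T"
    "\<And>a b c. a \<in> T \<Longrightarrow> b \<in> T \<Longrightarrow> c \<in> T \<Longrightarrow> a < b \<Longrightarrow> b < c \<Longrightarrow> \<phi> a b c = t"
proof -
  obtain idx where idx: "bij_betw idx C {0..<card C}"
    using ex_bij_betw_finite_nat[OF \<open>finite C\<close>] by blast
  define colour where "colour X = (let l = sorted_list_of_set X in idx (\<phi> (l!0) (l!1) (l!2)))" for X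
  have "colour X < card C" for X
    using bij_betw_apply[OF idx assms(3)] unfolding colour_def Let_def by simp
  then obtain T k where T: "T \<subseteq> S" "infinite T"
    and homogeneous: "\<forall>X. X \<subseteq> T \<and> finite X \<and> card X = 3 \<longrightarrow> colour X = k"
    using Ramsey[OF \<open>infinite S\<close>, of 3 colour "card C"] by blast
  have "\<phi> a b c = inv_into C idx k"
    if "a \<in> T" "b \<in> T" "c \<in> T" "a < b" "b < c" for a b c
  proof -
    have "card {a, b, c} = 3"
      using that by (auto simp: card_insert_if)
    then have "colour {a, b, c} = k"
      using homogeneous that by simp
    moreover have "sorted_list_of_set {a, b, c} = [a, b, c]"
      using that by (subst sorted_list_of_set_unique[symmetric]) (auto simp: card_insert_if)
    ultimately have "idx (\<phi> a b c) = k"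
      unfolding colour_def by simp
    then show ?thesis
      using bij_betw_imp_inj_on[OF idx] assms(3) by (metis inv_into_f_f)
  qed
  with T show thesis by (rule that)
qed

lemma coordinate_functionals:
  fixes B :: "'a::real_vector set"
  assumes "finite B" "independent B"
  obtains coord :: "'a \<Rightarrow> 'a \<Rightarrow> real"
  where "\<And>b. b \<in> B \<Longrightarrow> linear (coord b)" "\<And>v. v \<in> span B \<Longrightarrow> v = (\<Sum>b\<in>B. coord b v *\<^sub>R b)"
proof -
  have "\<forall>b. \<exists>f :: 'a \<Rightarrow> real. linear f \<and> (\<forall>b'\<in>B. f b' = (if b' = b then 1 else 0))"
  proof
    fix b
    show "\<exists>f :: 'a \<Rightarrow> real. linear f \<and> (\<forall>b'\<in>B. f b' = (if b' = b then 1 else 0))"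
      using linear_independent_extend[OF \<open>independent B\<close>, of "\<lambda>b'. if b' = b then 1 else 0"] by blast
  qed
  from choice[OF this] obtain coord :: "'a \<Rightarrow> 'a \<Rightarrow> real" where coord: "\<And>b. linear (coord b)"
    and dual: "\<And>b b'. b' \<in> B \<Longrightarrow> coord b b' = (if b' = b then 1 else 0)"
    by blast
  have "v = (\<Sum>b\<in>B. coord b v *\<^sub>R b)" if "v \<in> span B" for v
  proof -
    obtain u where u: "v = (\<Sum>b\<in>B. u b *\<^sub>R b)"
      using \<open>v \<in> span B\<close> span_finite[OF \<open>finite B\<close>] by auto
    have "coord b v = (\<Sum>b'\<in>B. u b' * coord b b')" for b
      unfolding u using coord[of b] by (simp add: linear_sum linear_scale)
    then have "coord b v = u b" if "b \<in> B" for b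
      using that \<open>finite B\<close> by (simp add: dual if_distrib cong: if_cong)
    then show ?thesis
      unfolding u by (intro sum.cong) auto
  qed
  with coord show thesis by (rule that)
qed

lemma in_affine_hull_if_orient_zero:
  fixes coord :: "'a::real_vector \<Rightarrow> 'a \<Rightarrow> real"
  assumes lin: "\<And>b. b \<in> B \<Longrightarrow> linear (coord b)"
    and expand: "\<And>v. v \<in> span B \<Longrightarrow> v = (\<Sum>b\<in>B. coord b v *\<^sub>R b)"
    and "p \<noteq> q" "q - p \<in> span B" "r - p \<in> span B"
    and zero: "\<And>i j. i \<in> B \<Longrightarrow> j \<in> B \<Longrightarrow> orient (coord i) (coord j) p q r = 0"
  shows "r \<in> affine hull {p, q}"
proof -
  define v w where "v = q - p" and "w = r - p"
  have "\<exists>i\<in>B. coord i v \<noteq> 0"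
  proof (rule ccontr)
    assume "\<not> (\<exists>i\<in>B. coord i v \<noteq> 0)"
    then have "v = 0" using expand[OF \<open>q - p \<in> span B\<close>] unfolding v_def by simp
    then show False using \<open>p \<noteq> q\<close> unfolding v_def by simp
  qed
  then obtain i where "i \<in> B" "coord i v \<noteq> 0" by blast
  define ratio where "ratio = coord i w / coord i v"
  have "coord j w = ratio * coord j v" if "j \<in> B" for j
  proof -
    have "coord i v * coord j w = coord i w * coord j v"
      using zero[OF \<open>i \<in> B\<close> that] lin[OF \<open>i \<in> B\<close>] lin[OF that]
      unfolding orient_def v_def w_def by (simp add: linear_diff)
    then show ?thesis
      unfolding ratio_def using \<open>coord i v \<noteq> 0\<close> by (simp add: field_simps)
  qed
  then have "w = (\<Sum>j\<in>B. ratio *\<^sub>R (coord j v *\<^sub>R j))"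
    using expand[OF \<open>r - p \<in> span B\<close>] unfolding w_def by (simp cong: sum.cong)
  also have "\<dots> = ratio *\<^sub>R (\<Sum>j\<in>B. coord j v *\<^sub>R j)"
    by (simp add: scaleR_sum_right)
  also have "\<dots> = ratio *\<^sub>R v"
    using expand[OF \<open>q - p \<in> span B\<close>] unfolding v_def by simp
  finally have "r = p + ratio *\<^sub>R (q - p)"
    unfolding v_def w_def by (simp add: algebra_simps)
  then show ?thesis
    unfolding affine_hull_2_alt by blast
qed

lemma convexly_independent_if_affine_independent:
  "\<not> affine_dependent Y \<Longrightarrow> convexly_independent Y"
  unfolding affine_dependent_def convexly_independent_def
  using convex_hull_subset_affine_hull by blast

lemma infinite_convexly_independent_subset_finite_dim:
  fixes x :: "nat \<Rightarrow> 'a::real_vector"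
  assumes "finite B" "independent B" and span: "\<And>k. x k - x 0 \<in> span B"
    and general: "\<And>a b c. a < c \<Longrightarrow> b < c \<Longrightarrow> x c \<notin> affine hull {x a, x b}"
  shows "\<exists>Y \<subseteq> range x. infinite Y \<and> convexly_independent Y"
proof -
  have "x a \<noteq> x c" if "a < c" for a c
    using general[OF that that] by (auto intro: hull_inc)
  then have "inj x" by (metis injI linorder_neqE_nat)
  obtain coord where lin: "\<And>b. b \<in> B \<Longrightarrow> linear (coord b)"
    and expand: "\<And>v. v \<in> span B \<Longrightarrow> v = (\<Sum>b\<in>B. coord b v *\<^sub>R b)"
    using coordinate_functionals[OF assms(1,2)] by blast
  define sign where "sign a b c = restrict
      (\<lambda>(i, j). sgn (orient (coord i) (coord j) (x a) (x b) (x c))) (B \<times> B)" for a b c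
  have sign_values: "sign a b c \<in> (B \<times> B) \<rightarrow>\<^sub>E {-1, 0, 1}" for a b c
    unfolding sign_def by (auto simp: sgn_real_def split: if_splits)
  have "finite ((B \<times> B) \<rightarrow>\<^sub>E {-1, 0, 1 :: real})"
    using \<open>finite B\<close> by (simp add: finite_PiE)
  then obtain T t where "infinite T"
    and homogeneous: "\<And>a b c. a \<in> T \<Longrightarrow> b \<in> T \<Longrightarrow> c \<in> T \<Longrightarrow> a < b \<Longrightarrow> b < c \<Longrightarrow> sign a b c = t"
    by (rule Ramsey_triples[where \<phi> = sign, OF infinite_UNIV_nat _ sign_values]) blast+
  have sgn_orient: "sgn (orient (coord i) (coord j) (x a) (x b) (x c)) = t (i, j)"
    if "i \<in> B" "j \<in> B" "a \<in> T" "b \<in> T" "c \<in> T" "a < b" "b < c" for i j a b c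
    using homogeneous[of a b c, symmetric] that unfolding sign_def by simp
  have "inj_on x T" using inj_on_subset[OF \<open>inj x\<close> subset_UNIV] .
  show ?thesis
  proof (cases "\<exists>i\<in>B. \<exists>j\<in>B. t (i, j) \<noteq> 0")
    case True
    then obtain i j where ij: "i \<in> B" "j \<in> B" "t (i, j) \<noteq> 0" by blast
    have "\<exists>f g. linear f \<and> linear g \<and> (\<forall>a\<in>T. \<forall>b\<in>T. \<forall>c\<in>T. a < b \<longrightarrow> b < c
            \<longrightarrow> 0 < orient f g (x a) (x b) (x c))"
    proof (cases "0 < t (i, j)")
      case True
      then show ?thesis
        using sgn_orient[OF ij(1,2)] lin ij by (metis sgn_greater)
    next
      case False
      then have "t (i, j) < 0" using ij(3) by linarith
      then show ?thesis
        using sgn_orient[OF ij(1,2)] lin ij orient_swap_coordinates[of "coord j" "coord i"]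
        by (metis neg_0_less_iff_less sgn_less)
    qed
    then obtain f g where "linear f" "linear g"
      and pos: "\<And>a b c. a \<in> T \<Longrightarrow> b \<in> T \<Longrightarrow> c \<in> T \<Longrightarrow> a < b \<Longrightarrow> b < c
            \<Longrightarrow> 0 < orient f g (x a) (x b) (x c)"
      by blast
    obtain Y where "Y \<subseteq> x ` T" "infinite Y" "convexly_independent Y"
      using infinite_convexly_independent_subset_if_orient_pos[OF \<open>linear f\<close> \<open>linear g\<close> \<open>inj_on x T\<close> \<open>infinite T\<close> pos]
      by blast
    then show ?thesis by blast
  next
    case False
    obtain a b c where "a \<in> T" "b \<in> T" "c \<in> T" "a < b" "b < c"
      using \<open>infinite T\<close> by (metis infinite_nat_iff_unbounded not_finite_existsD)
    have "x c \<in> affine hull {x a, x b}"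
    proof (rule in_affine_hull_if_orient_zero[OF lin expand])
      show "x a \<noteq> x b" using \<open>inj x\<close> \<open>a < b\<close> by (auto dest: injD)
      show "x b - x a \<in> span B" "x c - x a \<in> span B"
        using span_diff[OF span span] by (metis diff_diff_eq2 diff_add_cancel)+
      show "orient (coord i) (coord j) (x a) (x b) (x c) = 0" if "i \<in> B" "j \<in> B" for i j
        using sgn_orient[OF that \<open>a \<in> T\<close> \<open>b \<in> T\<close> \<open>c \<in> T\<close> \<open>a < b\<close> \<open>b < c\<close>] False that
        by (simp add: sgn_0_0)
    qed
    then show ?thesis using general \<open>a < b\<close> \<open>b < c\<close> by auto
  qed
qed

lemma infinite_convexly_independent_subset:
  fixes x :: "nat \<Rightarrow> 'a::real_vector"
  assumes general: "\<And>a b c. a < c \<Longrightarrow> b < c \<Longrightarrow> x c \<notin> affine hull {x a, x b}"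
  shows "\<exists>Y \<subseteq> range x. infinite Y \<and> convexly_independent Y"
proof -
  obtain B where B: "B \<subseteq> range (\<lambda>k. x k - x 0)" "independent B" "range (\<lambda>k. x k - x 0) \<subseteq> span B"
    by (rule basis_exists)
  show ?thesis
  proof (cases "finite B")
    case True
    have "x k - x 0 \<in> span B" for k
      using B(3) by blast
    from True B(2) this general show ?thesis
      by (rule infinite_convexly_independent_subset_finite_dim)
  next
    case False
    define Y where "Y = (\<lambda>v. x 0 + v) ` B"
    have "Y \<subseteq> range x" using B(1) unfolding Y_def by auto
    moreover have "infinite Y"
      using False finite_imageD[of "\<lambda>v. x 0 + v" B] unfolding Y_def by (auto simp: inj_on_def)
    moreover have "\<not> affine_dependent Y"
      using affine_dependent_imp_dependent B(2) affine_dependent_translation_eq[of B "x 0"]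
      unfolding Y_def by blast
    ultimately show ?thesis
      using convexly_independent_if_affine_independent by blast
  qed
qed

lemma sequence_avoiding:
  assumes "\<And>F. finite F \<Longrightarrow> \<exists>y\<in>X. y \<notin> G F"
  obtains x :: "nat \<Rightarrow> 'a" where "range x \<subseteq> X" "\<forall>n. x n \<notin> G (x ` {..<n})"
proof -
  define pick where "pick F = (SOME y. y \<in> X \<and> y \<notin> G F)" for F
  have pick: "pick F \<in> X \<and> pick F \<notin> G F" if "finite F" for F
    unfolding pick_def using someI_ex assms[OF that] by (metis (mono_tags, lifting))
  define prefix where "prefix = rec_nat [] (\<lambda>_ xs. xs @ [pick (set xs)])"
  define x where "x n = pick (set (prefix n))" for n
  have "set (prefix n) = x ` {..<n}" for n
    by (induction n) (simp_all add: prefix_def x_def lessThan_Suc)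
  then show thesis
    using that[of x] pick unfolding x_def by (metis finite_set image_subsetI)
qed

lemma affine_hull_2_subset_line:
  assumes "\<exists>v::'a::real_vector. v \<noteq> 0"
  obtains L where "is_line L" "affine hull {p, q :: 'a} \<subseteq> L"
proof (cases "p = q")
  case True
  obtain v :: 'a where "v \<noteq> 0" using assms by blast
  then have "p \<noteq> p + v" by simp
  then have "is_line (affine hull {p, p + v})" unfolding is_line_def by blast
  moreover have "affine hull {p, q} \<subseteq> affine hull {p, p + v}"
    using True by (simp add: hull_mono)
  ultimately show thesis by (rule that)
next
  case False
  then show thesis using that unfolding is_line_def by blast
qed

lemma infinite_convexly_independent_subset_if_not_covered_by_lines:
  fixes X :: "'a::real_vector set"
  assumes nontriv: "\<exists>v::'a. v \<noteq> 0"
    and not_covered: "\<not> (\<exists>\<L>. finite \<L> \<and> (\<forall>L\<in>\<L>. is_line L) \<and> X \<subseteq> \<Union>\<L>)"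
  shows "\<exists>Y. Y \<subseteq> X \<and> infinite Y \<and> convexly_independent Y"
proof -
  define joins where "joins F = (\<Union>p\<in>F. \<Union>q\<in>F. affine hull {p, q})" for F :: "'a set"
  have "\<forall>p q. \<exists>L. is_line L \<and> affine hull {p, q :: 'a} \<subseteq> L"
    using affine_hull_2_subset_line[OF nontriv] by metis
  then obtain line :: "'a \<Rightarrow> 'a \<Rightarrow> 'a set"
    where line: "\<And>p q. is_line (line p q)" "\<And>p q. affine hull {p, q} \<subseteq> line p q"
    by metis
  have "\<exists>y\<in>X. y \<notin> joins F" if "finite F" for F
  proof (rule ccontr)
    define \<L> where "\<L> = {line p q | p q. p \<in> F \<and> q \<in> F}"
    have "finite \<L>" "\<forall>L\<in>\<L>. is_line L"
      unfolding \<L>_def using \<open>finite F\<close> line(1) by (auto simp: finite_image_set2)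
    moreover have "joins F \<subseteq> \<Union>\<L>"
      unfolding joins_def \<L>_def using line(2) by blast
    moreover assume "\<not> (\<exists>y\<in>X. y \<notin> joins F)"
    ultimately have "finite \<L> \<and> (\<forall>L\<in>\<L>. is_line L) \<and> X \<subseteq> \<Union>\<L>"
      by blast
    then show False
      using not_covered by blast
  qed
  then obtain x :: "nat \<Rightarrow> 'a" where "range x \<subseteq> X" and avoids: "\<forall>n. x n \<notin> joins (x ` {..<n})"
    by (rule sequence_avoiding[where G = joins])
  have "x c \<notin> affine hull {x a, x b}" if "a < c" "b < c" for a b c
    using avoids that unfolding joins_def by blast
  then obtain Y where "Y \<subseteq> range x" "infinite Y" "convexly_independent Y"
    using infinite_convexly_independent_subset[of x] by blast
  then show ?thesis using \<open>range x \<subseteq> X\<close> by blast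
qed

theorem theorem5p2:
  fixes X :: "'a::real_vector set"
  assumes nontriv: "\<exists>v::'a. v \<noteq> 0"
  shows "((\<exists>\<L>. finite \<L> \<and> (\<forall>L\<in>\<L>. is_line L) \<and> X \<subseteq> \<Union>\<L>)
           \<longleftrightarrow> \<not> (\<exists>Y. Y \<subseteq> X \<and> infinite Y \<and> convexly_independent Y))
       \<and> (\<not> (\<exists>Y. Y \<subseteq> X \<and> infinite Y \<and> convexly_independent Y)
           \<longleftrightarrow> finite_order_dimension (Co X) (\<subseteq>))"
proof -
  have i_ii: "\<not> (\<exists>Y. Y \<subseteq> X \<and> infinite Y \<and> convexly_independent Y)"
    if "finite \<L>" "\<forall>L\<in>\<L>. is_line L" "X \<subseteq> \<Union>\<L>" for \<L>
    using finite_if_convexly_independent_covered_by_lines[OF that(1,2)] that(3) by blast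
  have ii_i: "\<exists>\<L>. finite \<L> \<and> (\<forall>L\<in>\<L>. is_line L) \<and> X \<subseteq> \<Union>\<L>"
    if "\<not> (\<exists>Y. Y \<subseteq> X \<and> infinite Y \<and> convexly_independent Y)"
    using infinite_convexly_independent_subset_if_not_covered_by_lines[OF nontriv] that by blast
  have iii_ii: "\<not> (\<exists>Y. Y \<subseteq> X \<and> infinite Y \<and> convexly_independent Y)"
    if "finite_order_dimension (Co X) (\<subseteq>)"
    using finite_if_convexly_independent_finite_order_dimension[OF that] by blast
  show ?thesis
    using i_ii ii_i iii_ii finite_order_dimension_Co_if_covered_by_lines by metis
qed

end
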